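(* Let $r\ge 3$ and $n\ge 2$ be integers and let $|X_\ell|=n$ for all $1\le\ell\le r$. Let $\mathcal F\subseteq X_1\times\dots\times X_r$ be coordinate-wise shifted and non-trivial intersecting, and of maximum size among all coordinate-wise shifted non-trivial intersecting families in $X_1\times\dots\times X_r$. Then $$|\mathcal F|\le n^{r-1}-(n-1)^{r-1}+n-1.$$
   Context: Let $X_\ell=[n]$ for $1\le \ell\le r$. For $A,B\in X_1\times\dots\times X_r$, write $A\cap B=\{\ell:A[\ell]=B[\ell]\}$ ($A[\ell]$ the $\ell$-th coordinate). $\mathcal F$ is intersecting if $|A\cap B|\ge 1$ for all $A,B\in\mathcal F$; it is non-trivial if there is no coordinate $\ell$ on which all members of $\mathcal F$ agree. For $1\le\ell\le r$ and $1<j\le n$, the shift $S^{(\ell)}_j$ acts on $F\in\mathcal F$ by: if $F[\ell]=j$ and the sequence $F'$ obtained from $F$ by replacing its $\ell$-th coordinate by $1$ is not in $\mathcal F$, then $S^{(\ell)}_j(F)=F'$; otherwise $S^{(\ell)}_j(F)=F$; $S^{(\ell)}_j(\mathcal F)=\{S^{(\ell)}_j(F):F\in\mathcal F\}$. $\mathcal F$ is coordinate-wise shifted if $S^{(\ell)}_j(\mathcal F)=\mathcal F$ for all $1\le\ell\le r$ and all $1<j\le n$. *)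

theory Defs
  imports "HOL-Library.FuncSet"
begin

text \<open>Sequences in X_1 x ... x X_r with X_l = [n] = {1..n}, represented as
  extensional functions on the coordinate set {1..r}.\<close>
definition cube :: "nat \<Rightarrow> nat \<Rightarrow> (nat \<Rightarrow> nat) set" where
  "cube r n = PiE {1..r} (\<lambda>_. {1..n})"

definition intersecting :: "nat \<Rightarrow> (nat \<Rightarrow> nat) set \<Rightarrow> bool" where
  "intersecting r F \<longleftrightarrow> (\<forall>A\<in>F. \<forall>B\<in>F. \<exists>l\<in>{1..r}. A l = B l)"

definition nontrivial :: "nat \<Rightarrow> (nat \<Rightarrow> nat) set \<Rightarrow> bool" where
  "nontrivial r F \<longleftrightarrow> \<not> (\<exists>l\<in>{1..r}. \<forall>A\<in>F. \<forall>B\<in>F. A l = B l)"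

definition shift :: "nat \<Rightarrow> nat \<Rightarrow> (nat \<Rightarrow> nat) set \<Rightarrow> (nat \<Rightarrow> nat) \<Rightarrow> (nat \<Rightarrow> nat)" where
  "shift l j F A = (if A l = j \<and> A(l := 1) \<notin> F then A(l := 1) else A)"

definition shift_family :: "nat \<Rightarrow> nat \<Rightarrow> (nat \<Rightarrow> nat) set \<Rightarrow> (nat \<Rightarrow> nat) set" where
  "shift_family l j F = shift l j F ` F"

definition cw_shifted :: "nat \<Rightarrow> nat \<Rightarrow> (nat \<Rightarrow> nat) set \<Rightarrow> bool" where
  "cw_shifted r n F \<longleftrightarrow> (\<forall>l\<in>{1..r}. \<forall>j\<in>{2..n}. shift_family l j F = F)"

end

theory Submission
  imports Defs "HOL-Combinatorics.Permutations"
begin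

(*
  For A in F let support A be the set of coordinates where A differs from 1, and put m = n - 1.
  Shiftedness makes the family of supports down-closed, the intersecting property means that
  no two supports cover [r], and non-triviality puts every singleton into it.  As at most
  m^|S| sequences have support S, it suffices to show
      sum_(S in SS) m^|S| + m^(r-1) <= (m+1)^(r-1) + m
  for every such family SS of subsets of [r].

  Fix a coordinate a and let BB = {B : a notin B, insert a B in SS} be its link, a family on
  the remaining d = r - 1 coordinates.  The members of SS avoiding a are disjoint from the
  complements of the link sets, so together they weigh at most (m+1)^d, while the members
  containing a weigh m times the link.  This reduces the claim to comparing level sizes of the
  link, |BB_k| <= |BB_(d-1-k)| for k >= d/2, which is Katona's cyclic permutation argument
  applied to the link (again down-closed and non-covering, with no sets of size d - 1 or d).
*)

section \<open>Arcs on a cycle\<close>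

definition fwd_dist :: "nat \<Rightarrow> nat \<Rightarrow> nat \<Rightarrow> nat" where
  "fwd_dist d s x = (if s \<le> x then x - s else x + d - s)"

definition arc :: "nat \<Rightarrow> nat \<Rightarrow> nat \<Rightarrow> nat set" where
  "arc d s k = {x. x < d \<and> fwd_dist d s x < k}"

lemma fwd_dist_self [simp]: "fwd_dist d s s = 0"
  unfolding fwd_dist_def by simp

lemma fwd_dist_lt: "s < d \<Longrightarrow> x < d \<Longrightarrow> fwd_dist d s x < d"
  unfolding fwd_dist_def by auto

lemma fwd_dist_triangle:
  "s < d \<Longrightarrow> x < d \<Longrightarrow> y < d \<Longrightarrow> fwd_dist d s y \<le> fwd_dist d s x + fwd_dist d x y"
  unfolding fwd_dist_def by auto

lemma fwd_dist_inj: "s < d \<Longrightarrow> x < d \<Longrightarrow> y < d \<Longrightarrow> fwd_dist d s x = fwd_dist d s y \<Longrightarrow> x = y"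
  unfolding fwd_dist_def by (auto split: if_splits)

lemma fwd_dist_diff:
  "s < d \<Longrightarrow> x < d \<Longrightarrow> y < d \<Longrightarrow> fwd_dist d s x \<le> fwd_dist d s y \<Longrightarrow>
    fwd_dist d x y = fwd_dist d s y - fwd_dist d s x"
  unfolding fwd_dist_def by (auto split: if_splits)

lemma arc_subset: "arc d s k \<subseteq> {..<d}"
  unfolding arc_def by auto

lemma card_arc:
  assumes "s < d" "k \<le> d"
  shows "card (arc d s k) = k"
proof -
  have "bij_betw (fwd_dist d s) (arc d s k) {..<k}"
  proof (rule bij_betw_imageI)
    show "inj_on (fwd_dist d s) (arc d s k)"
      using assms fwd_dist_inj unfolding inj_on_def arc_def by blast
    have "i \<in> fwd_dist d s ` arc d s k" if "i < k" for i
      using that assms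
      by (intro image_eqI[of _ _ "if s + i < d then s + i else s + i - d"]) (auto simp: arc_def fwd_dist_def)
    then show "fwd_dist d s ` arc d s k = {..<k}"
      unfolding arc_def by auto
  qed
  then show ?thesis
    by (simp add: bij_betw_same_card)
qed

lemma arc_subset_arc:
  assumes "s < d" "x < d" "fwd_dist d s x + j \<le> k"
  shows "arc d x j \<subseteq> arc d s k"
proof
  fix y
  assume "y \<in> arc d x j"
  then have "y < d" "fwd_dist d x y < j"
    unfolding arc_def by auto
  moreover have "fwd_dist d s y \<le> fwd_dist d s x + fwd_dist d x y"
    using fwd_dist_triangle assms(1,2) \<open>y < d\<close> by blast
  ultimately show "y \<in> arc d s k"
    using assms(3) unfolding arc_def by auto
qed

lemma fwd_dist_if_arcs_not_covering:
  assumes "s < d" "s' < d" "arc d s k \<union> arc d s' k \<noteq> {..<d}"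
  shows "fwd_dist d s s' < d - k \<or> k < fwd_dist d s s'"
proof (rule ccontr)
  assume "\<not> ?thesis"
  then have "arc d s k \<union> arc d s' k = {..<d}"
    using assms(1,2) unfolding arc_def fwd_dist_def by (auto split: if_splits)
  with assms(3) show False
    by blast
qed

text \<open>Katona's lemma, in complemented form: the complements of the arcs are pairwise
  intersecting \<open>(d - k)\<close>-arcs.\<close>

lemma card_le_if_no_covering_arcs:
  assumes S: "S \<subseteq> {..<d}" and k: "k < d" "d \<le> 2 * k"
    and no_cover: "\<And>s s'. s \<in> S \<Longrightarrow> s' \<in> S \<Longrightarrow> arc d s k \<union> arc d s' k \<noteq> {..<d}"
  shows "card S \<le> d - k"
proof (cases "S = {}")
  case False
  then obtain a where a: "a \<in> S"
    by blast
  have near: "fwd_dist d s s' < d - k \<or> k < fwd_dist d s s'" if "s \<in> S" "s' \<in> S" for s s'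
    using that S by (intro fwd_dist_if_arcs_not_covering[OF _ _ no_cover[OF that]]) auto
  txt \<open>Start points fewer than \<open>d - k\<close> steps after \<open>a\<close> are counted by their distance from \<open>a\<close>,
    the others by that distance minus \<open>k\<close>; a collision would put two start points exactly \<open>k\<close> steps
    apart.\<close>
  define \<phi> where "\<phi> x = (if fwd_dist d a x < d - k then fwd_dist d a x else fwd_dist d a x - k)" for x
  have far: "k < fwd_dist d a z" if "z \<in> S" "\<not> fwd_dist d a z < d - k" for z
    using near[OF a that(1)] that(2) by simp
  have no_cross: "\<phi> x \<noteq> \<phi> y"
    if x: "x \<in> S" and y: "y \<in> S" and "fwd_dist d a x < d - k" "\<not> fwd_dist d a y < d - k" for x y
  proof
    assume "\<phi> x = \<phi> y"
    then have "fwd_dist d a x = fwd_dist d a y - k"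
      using that(3,4) by (simp add: \<phi>_def)
    moreover have "k < fwd_dist d a y"
      using far[OF y] that(4) by simp
    moreover have "a < d" "x < d" "y < d"
      using a x y S by auto
    ultimately have "fwd_dist d x y = k"
      using fwd_dist_diff[of a d x y] by simp
    then show False
      using near[OF x y] k by simp
  qed
  have "inj_on \<phi> S"
  proof (rule inj_onI)
    fix x y
    assume x: "x \<in> S" and y: "y \<in> S" and eq: "\<phi> x = \<phi> y"
    have "fwd_dist d a x < d - k \<longleftrightarrow> fwd_dist d a y < d - k"
      using no_cross[OF x y] no_cross[OF y x] eq by metis
    moreover have "\<not> fwd_dist d a x < d - k \<Longrightarrow> k < fwd_dist d a x \<and> k < fwd_dist d a y"
      using far[OF x] far[OF y] calculation by blast
    ultimately have "fwd_dist d a x = fwd_dist d a y"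
      using eq unfolding \<phi>_def by (cases "fwd_dist d a x < d - k") auto
    then show "x = y"
      using fwd_dist_inj[of a d x y] x y a S by auto
  qed
  moreover have "\<phi> ` S \<subseteq> {..<d - k}"
  proof (rule image_subsetI)
    fix x
    assume "x \<in> S"
    then have "fwd_dist d a x < d"
      using fwd_dist_lt a S by blast
    then show "\<phi> x \<in> {..<d - k}"
      using k unfolding \<phi>_def by auto
  qed
  ultimately show ?thesis
    using card_inj_on_le[of \<phi> S "{..<d - k}"] by simp
qed simp

lemma fwd_dist_Suc_mod_le:
  "s < d \<Longrightarrow> x < d \<Longrightarrow> fwd_dist d s (Suc x mod d) \<le> Suc (fwd_dist d s x)"
  by (cases "Suc x = d") (auto simp: fwd_dist_def)

lemma cycle_subset_if_Suc_mod_closed: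
  assumes "s \<in> U" "s < d" and closed: "\<And>x. x \<in> U \<Longrightarrow> x < d \<Longrightarrow> Suc x mod d \<in> U"
  shows "{..<d} \<subseteq> U"
proof -
  have orbit: "(s + i) mod d \<in> U" for i
  proof (induction i)
    case 0
    then show ?case
      using assms by simp
  next
    case (Suc i)
    have "Suc ((s + i) mod d) mod d \<in> U"
      using closed[OF Suc] assms(2) by simp
    then show ?case
      by (simp add: mod_Suc_eq)
  qed
  have "(s + fwd_dist d s x) mod d = x" if "x < d" for x
    using that assms(2) unfolding fwd_dist_def by (auto simp: le_mod_geq)
  then show ?thesis
    using orbit by (metis lessThan_iff subsetI)
qed

text \<open>Until the neighbourhood fills the cycle, it is not closed under successor, so each extra
  step adds a point.\<close>

lemma card_fwd_neighbourhood_ge: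
  assumes S: "S \<subseteq> {..<d}" "S \<noteq> {}"
  shows "min d (card S + g) \<le> card {x. x < d \<and> (\<exists>s\<in>S. fwd_dist d s x \<le> g)}"
proof (induction g)
  case 0
  have "S \<subseteq> {x. x < d \<and> (\<exists>s\<in>S. fwd_dist d s x \<le> 0)}"
    using S by force
  then show ?case
    by (simp add: card_mono le_diff_conv min.coboundedI2)
next
  case (Suc g)
  define U where "U = {x. x < d \<and> (\<exists>s\<in>S. fwd_dist d s x \<le> g)}"
  define V where "V = {x. x < d \<and> (\<exists>s\<in>S. fwd_dist d s x \<le> Suc g)}"
  have "U \<subseteq> V"
    unfolding U_def V_def using le_SucI by blast
  have "finite V"
    unfolding V_def by simp
  show ?case
  proof (cases "{..<d} \<subseteq> U")
    case True
    then have "card {..<d} \<le> card V"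
      using \<open>U \<subseteq> V\<close> \<open>finite V\<close> by (meson card_mono order_trans)
    then show ?thesis
      unfolding V_def by simp
  next
    case False
    obtain s where "s \<in> S"
      using S by auto
    then have "s \<in> U" "s < d"
      using S unfolding U_def by force+
    then obtain x where x: "x \<in> U" "x < d" "Suc x mod d \<notin> U"
      using False cycle_subset_if_Suc_mod_closed[of s U d] by blast
    then obtain t where t: "t \<in> S" "fwd_dist d t x \<le> g"
      unfolding U_def by auto
    then have "fwd_dist d t (Suc x mod d) \<le> Suc g"
      using fwd_dist_Suc_mod_le[of t d x] x S by fastforce
    then have "Suc x mod d \<in> V"
      unfolding V_def using t x by auto
    then have "card (insert (Suc x mod d) U) \<le> card V"
      using \<open>U \<subseteq> V\<close> \<open>finite V\<close> by (intro card_mono) auto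
    moreover have "finite U"
      unfolding U_def by simp
    ultimately have "Suc (card U) \<le> card V"
      using x(3) by simp
    then show ?thesis
      using Suc.IH unfolding U_def V_def by simp
  qed
qed

section \<open>Katona's cyclic permutation argument\<close>

definition down_closed :: "'a set set \<Rightarrow> bool" where
  "down_closed \<S> \<longleftrightarrow> (\<forall>S\<in>\<S>. \<forall>T. T \<subseteq> S \<longrightarrow> T \<in> \<S>)"

definition non_covering :: "'a set \<Rightarrow> 'a set set \<Rightarrow> bool" where
  "non_covering X \<S> \<longleftrightarrow> (\<forall>S\<in>\<S>. \<forall>T\<in>\<S>. S \<union> T \<noteq> X)"

lemma mult_le_mult_if_min_le:
  fixes s t j k :: nat
  assumes s: "s \<le> j + 1" and t: "min (j + k + 1) (s + (k - j)) \<le> t" and "j \<le> k"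
  shows "(k + 1) * s \<le> (j + 1) * t"
proof (cases "j + k + 1 \<le> t")
  case True
  have "(k + 1) * s \<le> (j + k + 1) * (j + 1)"
    using s by (intro mult_le_mono) auto
  also have "\<dots> \<le> t * (j + 1)"
    using True by (rule mult_le_mono1)
  finally show ?thesis
    by (simp add: mult.commute)
next
  case False
  then have t: "s + (k - j) \<le> t"
    using t by linarith
  have "(k + 1) * s = (j + 1) * s + (k - j) * s"
    using \<open>j \<le> k\<close> by (simp add: add_mult_distrib[symmetric])
  also have "\<dots> \<le> (j + 1) * s + (k - j) * (j + 1)"
    using s by (intro add_left_mono mult_le_mono2)
  also have "\<dots> = (j + 1) * (s + (k - j))"
    by (simp add: algebra_simps)
  also have "\<dots> \<le> (j + 1) * t"
    using t by (rule mult_le_mono2)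
  finally show ?thesis .
qed

text \<open>At most \<open>d - k\<close> of the \<open>k\<close>-arcs lie in \<open>\<G>\<close>, and by down-closure every point at most
  \<open>k - j\<close> steps after one of their start points starts a \<open>j\<close>-arc in \<open>\<G>\<close>.\<close>

lemma cyclic_level_ineq:
  assumes down: "down_closed \<G>" and nc: "non_covering {..<d} \<G>"
    and k: "d \<le> 2 * k" "j + k + 1 = d"
  shows "(k + 1) * card {s. s < d \<and> arc d s k \<in> \<G>} \<le> (d - k) * card {s. s < d \<and> arc d s j \<in> \<G>}"
proof -
  define S where "S = {s. s < d \<and> arc d s k \<in> \<G>}"
  define T where "T = {s. s < d \<and> arc d s j \<in> \<G>}"
  have "S \<subseteq> {..<d}"
    unfolding S_def by auto
  have dk: "d - k = j + 1" and "j \<le> k"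
    using k by auto
  have card_S: "card S \<le> j + 1"
    unfolding dk[symmetric]
  proof (rule card_le_if_no_covering_arcs[OF \<open>S \<subseteq> {..<d}\<close>])
    show "k < d" "d \<le> 2 * k"
      using k by auto
    show "arc d s k \<union> arc d s' k \<noteq> {..<d}" if "s \<in> S" "s' \<in> S" for s s'
      using nc that unfolding non_covering_def S_def by blast
  qed
  have "(k + 1) * card S \<le> (j + 1) * card T"
  proof (cases "S = {}")
    case False
    have "{x. x < d \<and> (\<exists>s\<in>S. fwd_dist d s x \<le> k - j)} \<subseteq> T"
    proof safe
      fix x s
      assume x: "x < d" and s: "s \<in> S" and "fwd_dist d s x \<le> k - j"
      then have "fwd_dist d s x + j \<le> k" "s < d"
        using \<open>j \<le> k\<close> unfolding S_def by auto
      then have "arc d x j \<subseteq> arc d s k"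
        using x by (intro arc_subset_arc)
      then show "x \<in> T"
        using down s x unfolding down_closed_def S_def T_def by blast
    qed
    then have "card {x. x < d \<and> (\<exists>s\<in>S. fwd_dist d s x \<le> k - j)} \<le> card T"
      by (rule card_mono[rotated]) (simp add: T_def)
    then have "min (j + k + 1) (card S + (k - j)) \<le> card T"
      unfolding k(2) by (rule order_trans[OF card_fwd_neighbourhood_ge[OF \<open>S \<subseteq> {..<d}\<close> False]])
    then show ?thesis
      using card_S \<open>j \<le> k\<close> by (intro mult_le_mult_if_min_le)
  qed simp
  then show ?thesis
    unfolding dk S_def T_def .
qed

lemma ex_permutes_image_eq:
  assumes X: "finite X" and B: "B \<subseteq> X" "B' \<subseteq> X" and c: "card B = card B'"
  obtains \<tau> where "\<tau> permutes X" "\<tau> ` B = B'"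
proof -
  have "finite B" "finite B'"
    using X B finite_subset by auto
  then obtain f where f: "bij_betw f B B'"
    using c finite_same_card_bij by blast
  have "card (X - B) = card (X - B')"
    using c B X \<open>finite B\<close> \<open>finite B'\<close> by (simp add: card_Diff_subset)
  then obtain g where g: "bij_betw g (X - B) (X - B')"
    using X finite_same_card_bij by blast
  define \<tau> where "\<tau> x = (if x \<in> B then f x else if x \<in> X then g x else x)" for x
  have on_B: "bij_betw \<tau> B B'"
    using f unfolding \<tau>_def by (rule bij_betw_cong[THEN iffD1, rotated]) auto
  have "bij_betw \<tau> (X - B) (X - B')"
    using g unfolding \<tau>_def by (rule bij_betw_cong[THEN iffD1, rotated]) auto
  then have "bij_betw \<tau> (B \<union> (X - B)) (B' \<union> (X - B'))"
    using on_B by (intro bij_betw_combine) auto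
  moreover have "B \<union> (X - B) = X" "B' \<union> (X - B') = X"
    using B by auto
  ultimately have "bij_betw \<tau> X X"
    by simp
  then have "\<tau> permutes X"
    by (rule bij_imp_permutes) (use B in \<open>auto simp: \<tau>_def\<close>)
  moreover have "\<tau> ` B = B'"
    using on_B by (simp add: bij_betw_def)
  ultimately show thesis
    by (rule that)
qed

lemma card_image_permutes: "p permutes X \<Longrightarrow> card (p ` Y) = card Y"
  by (meson card_image inj_on_subset permutes_inj subset_UNIV)

lemma card_permutes_image_eq_le:
  assumes "finite X" "B \<subseteq> X" "B' \<subseteq> X" "card B = card B'"
  shows "card {p. p permutes X \<and> p ` Y = B} \<le> card {p. p permutes X \<and> p ` Y = B'}"
proof -
  obtain \<tau> where \<tau>: "\<tau> permutes X" "\<tau> ` B = B'"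
    using ex_permutes_image_eq[OF assms] .
  have "inj_on ((\<circ>) \<tau>) {p. p permutes X \<and> p ` Y = B}"
    by (rule inj_onI) (metis comp_assoc id_comp permutes_inv_o(2)[OF \<tau>(1)])
  moreover have "(\<circ>) \<tau> ` {p. p permutes X \<and> p ` Y = B} \<subseteq> {p. p permutes X \<and> p ` Y = B'}"
    using \<tau> by (auto simp: permutes_compose image_comp[symmetric])
  moreover have "finite {p. p permutes X \<and> p ` Y = B'}"
    using finite_permutations[OF \<open>finite X\<close>] by (rule finite_subset[rotated]) auto
  ultimately show ?thesis
    by (rule card_inj_on_le)
qed

lemma card_permutes_image_eq:
  assumes X: "finite X" and "Y \<subseteq> X" "B \<subseteq> X" "card B = card Y"
  shows "card {p. p permutes X \<and> p ` Y = B} * (card X choose card Y) = fact (card X)"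
proof -
  define \<K> where "\<K> = {B'. B' \<subseteq> X \<and> card B' = card Y}"
  define c where "c B' = card {p. p permutes X \<and> p ` Y = B'}" for B'
  have c_const: "c B' = c B" if "B' \<in> \<K>" for B'
    using that assms card_permutes_image_eq_le[OF X, of B' B Y] card_permutes_image_eq_le[OF X, of B B' Y]
    unfolding \<K>_def c_def by fastforce
  have fibres: "{p. p permutes X} = (\<Union>B'\<in>\<K>. {p. p permutes X \<and> p ` Y = B'})"
    using \<open>Y \<subseteq> X\<close> by (auto simp: \<K>_def card_image_permutes permutes_in_image subset_iff)
  have "fact (card X) = card (\<Union>B'\<in>\<K>. {p. p permutes X \<and> p ` Y = B'})"
    unfolding fibres[symmetric] by (rule card_permutations[OF refl X, symmetric])
  also have "\<dots> = (\<Sum>B'\<in>\<K>. c B')"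
    unfolding c_def using X
    by (intro card_UN_disjoint) (auto simp: \<K>_def intro: finite_subset[OF _ finite_permutations[OF X]])
  also have "\<dots> = card \<K> * c B"
    using c_const by simp
  also have "card \<K> = card X choose card Y"
    unfolding \<K>_def by (rule n_subsets[OF X])
  finally show ?thesis
    unfolding c_def by simp
qed

lemma card_permutes_image_mem:
  assumes X: "finite X" and \<B>: "\<B> \<subseteq> Pow X" and Y: "Y \<subseteq> X"
  shows "card {p. p permutes X \<and> p ` Y \<in> \<B>} * (card X choose card Y)
    = card {B\<in>\<B>. card B = card Y} * fact (card X)"
proof -
  define \<L> where "\<L> = {B\<in>\<B>. card B = card Y}"
  have "finite \<B>"
    using X by (rule finite_subset[OF \<B>, simplified])
  then have "finite \<L>"
    unfolding \<L>_def by simp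
  have fibres: "{p. p permutes X \<and> p ` Y \<in> \<B>} = (\<Union>B\<in>\<L>. {p. p permutes X \<and> p ` Y = B})"
    by (auto simp: \<L>_def card_image_permutes)
  have "card {p. p permutes X \<and> p ` Y \<in> \<B>} = (\<Sum>B\<in>\<L>. card {p. p permutes X \<and> p ` Y = B})"
    unfolding fibres using \<open>finite \<L>\<close>
    by (intro card_UN_disjoint) (auto intro: finite_subset[OF _ finite_permutations[OF X]])
  then have "card {p. p permutes X \<and> p ` Y \<in> \<B>} * (card X choose card Y)
      = (\<Sum>B\<in>\<L>. card {p. p permutes X \<and> p ` Y = B} * (card X choose card Y))"
    by (simp add: sum_distrib_right)
  also have "\<dots> = (\<Sum>B\<in>\<L>. fact (card X))"
    using card_permutes_image_eq[OF X Y] \<B> by (intro sum.cong) (auto simp: \<L>_def)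
  finally show ?thesis
    by (simp add: \<L>_def)
qed

lemma sum_permutes_card_arcs:
  assumes X: "finite X" and \<B>: "\<B> \<subseteq> Pow X"
    and e: "bij_betw e {..<card X} X" and l: "l \<le> card X"
  shows "(\<Sum>p | p permutes X. card {s. s < card X \<and> p ` e ` arc (card X) s l \<in> \<B>}) * (card X choose l)
    = card X * (card {B\<in>\<B>. card B = l} * fact (card X))"
proof -
  define d where "d = card X"
  define P where "P = {p. p permutes X}"
  have "finite P"
    unfolding P_def using finite_permutations[OF X] .
  have arc_image: "e ` arc d s l \<subseteq> X" "card (e ` arc d s l) = l" if "s < d" for s
  proof -
    have "inj_on e (arc d s l)"
      using e arc_subset bij_betw_imp_inj_on inj_on_subset unfolding d_def by metis
    then show "card (e ` arc d s l) = l"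
      using card_arc[OF that l[folded d_def]] by (simp add: card_image)
    show "e ` arc d s l \<subseteq> X"
      using e arc_subset bij_betw_imp_surj_on unfolding d_def by blast
  qed
  have "(\<Sum>p\<in>P. card {s. s < d \<and> p ` e ` arc d s l \<in> \<B>})
      = (\<Sum>p\<in>P. \<Sum>s<d. of_bool (p ` e ` arc d s l \<in> \<B>))"
    by (simp add: lessThan_def Collect_conj_eq)
  also have "\<dots> = (\<Sum>s<d. \<Sum>p\<in>P. of_bool (p ` e ` arc d s l \<in> \<B>))"
    by (rule sum.swap)
  also have "\<dots> = (\<Sum>s<d. card {p. p permutes X \<and> p ` e ` arc d s l \<in> \<B>})"
    using \<open>finite P\<close> by (simp add: P_def Collect_conj_eq)
  finally have swap: "(\<Sum>p\<in>P. card {s. s < d \<and> p ` e ` arc d s l \<in> \<B>})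
      = (\<Sum>s<d. card {p. p permutes X \<and> p ` e ` arc d s l \<in> \<B>})" .
  have "(\<Sum>s<d. card {p. p permutes X \<and> p ` e ` arc d s l \<in> \<B>}) * (d choose l)
      = (\<Sum>s<d. card {p. p permutes X \<and> p ` e ` arc d s l \<in> \<B>} * (d choose l))"
    by (simp add: sum_distrib_right)
  also have "\<dots> = (\<Sum>s<d. card {B\<in>\<B>. card B = l} * fact d)"
  proof (rule sum.cong[OF refl])
    fix s
    assume "s \<in> {..<d}"
    then show "card {p. p permutes X \<and> p ` e ` arc d s l \<in> \<B>} * (d choose l)
        = card {B\<in>\<B>. card B = l} * fact d"
      using card_permutes_image_mem[OF X \<B> arc_image(1)] arc_image(2) by (simp add: d_def)
  qed
  finally show ?thesis
    using swap unfolding P_def d_def[symmetric] by simp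
qed

lemma cyclic_order_level_ineq:
  assumes f: "bij_betw f {..<card X} X" and \<B>: "down_closed \<B>" "non_covering X \<B>"
    and k: "card X \<le> 2 * k" "j + k + 1 = card X"
  shows "(k + 1) * card {s. s < card X \<and> f ` arc (card X) s k \<in> \<B>}
    \<le> (card X - k) * card {s. s < card X \<and> f ` arc (card X) s j \<in> \<B>}"
proof -
  have "down_closed {A. f ` A \<in> \<B>}"
    using \<B>(1) image_mono unfolding down_closed_def by (metis mem_Collect_eq)
  moreover have "f ` {..<card X} = X"
    using f by (simp add: bij_betw_def)
  then have "non_covering {..<card X} {A. f ` A \<in> \<B>}"
    using \<B>(2) unfolding non_covering_def by (metis image_Un mem_Collect_eq)
  ultimately show ?thesis
    using cyclic_level_ineq[of "{A. f ` A \<in> \<B>}" "card X" k j] k by simp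
qed

text \<open>Averaging over the cyclic orders \<open>p \<circ> e\<close> of \<open>X\<close>.\<close>

lemma katona_level_ineq:
  assumes X: "finite X" and \<B>: "\<B> \<subseteq> Pow X" "down_closed \<B>" "non_covering X \<B>"
    and k: "card X \<le> 2 * k" "j + k + 1 = card X"
  shows "card {B\<in>\<B>. card B = k} \<le> card {B\<in>\<B>. card B = j}"
proof -
  define d where "d = card X"
  obtain e where e: "bij_betw e {..<d} X"
    using ex_bij_betw_nat_finite[OF X] by (auto simp: d_def lessThan_atLeast0)
  define N where "N l p = card {s. s < d \<and> p ` e ` arc d s l \<in> \<B>}" for l p
  define P where "P = {p. p permutes X}"
  have "(k + 1) * N k p \<le> (d - k) * N j p" if "p permutes X" for p
    using cyclic_order_level_ineq[OF bij_betw_trans[OF e[unfolded d_def] permutes_imp_bij[OF that]] \<B>(2,3) k]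
    unfolding N_def d_def image_comp .
  then have sums: "(k + 1) * (\<Sum>p\<in>P. N k p) \<le> (d - k) * (\<Sum>p\<in>P. N j p)"
    unfolding sum_distrib_left P_def by (intro sum_mono) simp
  have count_k: "(\<Sum>p\<in>P. N k p) * (d choose k) = d * (card {B\<in>\<B>. card B = k} * fact d)"
    using sum_permutes_card_arcs[OF X \<B>(1)] e k unfolding N_def P_def d_def by simp
  have "d - j = Suc k"
    using k unfolding d_def by simp
  then have "d choose j = d choose Suc k"
    using binomial_symmetric[of j d] k unfolding d_def by simp
  then have count_j: "(\<Sum>p\<in>P. N j p) * (d choose Suc k) = d * (card {B\<in>\<B>. card B = j} * fact d)"
    using sum_permutes_card_arcs[OF X \<B>(1), of e j] e k unfolding N_def P_def d_def by simp
  define M where "M = d * (d - 1 choose k)"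
  have M: "(d - k) * (d choose k) = M" "(k + 1) * (d choose Suc k) = M"
    unfolding M_def using binomial_absorb_comp binomial_absorption by simp_all
  have "M * (d * (card {B\<in>\<B>. card B = k} * fact d))
      = ((k + 1) * (\<Sum>p\<in>P. N k p)) * ((d choose k) * (d choose Suc k))"
    unfolding M(2)[symmetric] count_k[symmetric] by (simp only: ac_simps)
  also have "\<dots> \<le> ((d - k) * (\<Sum>p\<in>P. N j p)) * ((d choose k) * (d choose Suc k))"
    using sums by (rule mult_right_mono) simp
  also have "\<dots> = M * (d * (card {B\<in>\<B>. card B = j} * fact d))"
    unfolding M(1)[symmetric] count_j[symmetric] by (simp only: ac_simps)
  finally show ?thesis
    using k unfolding M_def d_def by (simp add: zero_less_binomial_iff)
qed

section \<open>A weighted bound for down-closed non-covering families\<close>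

lemma sum_nonneg_by_reflection:
  fixes a :: "nat \<Rightarrow> 'a::linordered_ab_group_add"
  assumes "\<And>k. k < d \<Longrightarrow> 0 \<le> a k + a (d - Suc k)"
  shows "0 \<le> (\<Sum>k<d. a k)"
proof -
  have "0 \<le> (\<Sum>k<d. a k + a (d - Suc k))"
    using assms by (intro sum_nonneg) simp
  also have "\<dots> = (\<Sum>k<d. a k) + (\<Sum>k<d. a k)"
    by (simp add: sum.distrib sum.nat_diff_reindex)
  finally show ?thesis
    by simp
qed

lemma sum_level_weights_nonneg:
  fixes c :: "nat \<Rightarrow> nat" and m d :: nat
  assumes m: "1 \<le> m" and levels: "\<And>k j. d \<le> 2 * k \<Longrightarrow> j + k + 1 = d \<Longrightarrow> c k \<le> c j"
  shows "0 \<le> (\<Sum>k<d. int (c k) * (int m ^ (d - k) - int m ^ (k + 1)))"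
proof -
  define w where "w k = int m ^ (d - k) - int m ^ (k + 1)" for k
  txt \<open>The weights of levels \<open>k\<close> and \<open>d - 1 - k\<close> are opposite, and for \<open>d \<le> 2 * k\<close> the
    nonpositive weight sits on the smaller of the two levels.\<close>
  have "0 \<le> (\<Sum>k<d. int (c k) * w k)"
  proof (rule sum_nonneg_by_reflection)
    fix k
    assume k: "k < d"
    have "w (d - Suc k) = - w k"
      using k unfolding w_def by (simp add: Suc_diff_Suc)
    then have "int (c k) * w k + int (c (d - Suc k)) * w (d - Suc k)
        = (int (c k) - int (c (d - Suc k))) * w k"
      by (simp add: algebra_simps)
    moreover consider "d \<le> 2 * k" | "d \<le> 2 * (d - Suc k)" | "d - Suc k = k"
      using k by linarith
    then have "0 \<le> (int (c k) - int (c (d - Suc k))) * w k"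
    proof cases
      case 1
      have "c k \<le> c (d - Suc k)"
        using levels[OF 1] k by simp
      moreover have "int m ^ (d - k) \<le> int m ^ (k + 1)"
        using 1 m by (intro power_increasing) auto
      ultimately show ?thesis
        unfolding w_def by (intro mult_nonpos_nonpos) auto
    next
      case 2
      have "c (d - Suc k) \<le> c k"
        using levels[OF 2] k by simp
      moreover have "int m ^ (k + 1) \<le> int m ^ (d - k)"
        using 2 m k by (intro power_increasing) auto
      ultimately show ?thesis
        unfolding w_def by (intro mult_nonneg_nonneg) auto
    next
      case 3
      then show ?thesis
        by simp
    qed
    ultimately show "0 \<le> int (c k) * w k + int (c (d - Suc k)) * w (d - Suc k)"
      by simp
  qed
  then show ?thesis
    unfolding w_def .
qed

lemma level_profile_ineq:
  fixes c :: "nat \<Rightarrow> nat" and m d :: nat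
  assumes m: "1 \<le> m" and c0: "c 0 = 1" and c_top: "c (d - 1) = 0"
    and levels: "\<And>k j. d \<le> 2 * k \<Longrightarrow> j + k + 1 = d \<Longrightarrow> c k \<le> c j"
  shows "m * (\<Sum>k<d. c k * m ^ k) + m ^ d \<le> (\<Sum>k<d. c k * m ^ (d - k)) + m"
proof -
  have "d - 1 \<noteq> 0"
    using c0 c_top by auto
  define w where "w k = int m ^ (d - k) - int m ^ (k + 1)" for k
  define c' where "c' k = (if k = 0 then 0 else c k)" for k
  have "c' k \<le> c' j" if "d \<le> 2 * k" "j + k + 1 = d" for k j
    using levels[OF that] that c_top unfolding c'_def by auto
  then have "0 \<le> (\<Sum>k<d. int (c' k) * w k)"
    unfolding w_def by (rule sum_level_weights_nonneg[OF m])
  moreover have "(\<Sum>k<d. int (c k) * w k) = (\<Sum>k<d. int (c' k) * w k) + w 0"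
    using c0 \<open>d - 1 \<noteq> 0\<close>
    by (cases d) (simp_all add: c'_def sum.lessThan_Suc_shift del: sum.lessThan_Suc)
  moreover have "(\<Sum>k<d. int (c k) * w k)
      = int (\<Sum>k<d. c k * m ^ (d - k)) - int (m * (\<Sum>k<d. c k * m ^ k))"
    unfolding w_def by (simp add: sum_subtractf sum_distrib_left algebra_simps)
  moreover have "w 0 = int (m ^ d) - int m"
    unfolding w_def by simp
  ultimately have "int (m * (\<Sum>k<d. c k * m ^ k) + m ^ d) \<le> int ((\<Sum>k<d. c k * m ^ (d - k)) + m)"
    unfolding of_nat_add by linarith
  then show ?thesis
    by (simp only: of_nat_le_iff)
qed

definition link :: "'a \<Rightarrow> 'a set set \<Rightarrow> 'a set set" where
  "link a \<S> = {B. a \<notin> B \<and> insert a B \<in> \<S>}"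

lemma down_closed_link: "down_closed \<S> \<Longrightarrow> down_closed (link a \<S>)"
  unfolding down_closed_def link_def by (blast dest: insert_mono)

lemma non_covering_link:
  assumes "non_covering X \<S>" "a \<in> X"
  shows "non_covering (X - {a}) (link a \<S>)"
  unfolding non_covering_def
proof (intro ballI notI)
  fix B B'
  assume "B \<in> link a \<S>" "B' \<in> link a \<S>" "B \<union> B' = X - {a}"
  moreover have "insert a B \<union> insert a B' = insert a (B \<union> B')"
    by blast
  ultimately show False
    using assms unfolding non_covering_def link_def by (metis insert_Diff mem_Collect_eq)
qed

lemma link_subset_Pow: "\<S> \<subseteq> Pow X \<Longrightarrow> link a \<S> \<subseteq> Pow (X - {a})"
  unfolding link_def by auto

lemma sum_pow_card_Pow:
  fixes m :: "'b::comm_semiring_1"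
  shows "finite A \<Longrightarrow> (\<Sum>S\<in>Pow A. m ^ card S) = (m + 1) ^ card A"
  using prod_add[of A "\<lambda>_. m" "\<lambda>_. 1"] by simp

lemma sum_weight_split_link:
  fixes m :: nat
  assumes "finite \<S>" "\<forall>S\<in>\<S>. finite S"
  shows "(\<Sum>S\<in>\<S>. m ^ card S) = (\<Sum>S\<in>{S\<in>\<S>. a \<notin> S}. m ^ card S) + m * (\<Sum>B\<in>link a \<S>. m ^ card B)"
proof -
  have "{S\<in>\<S>. a \<in> S} = insert a ` link a \<S>"
  proof (intro equalityI subsetI)
    fix S
    assume "S \<in> {S\<in>\<S>. a \<in> S}"
    then have "S = insert a (S - {a})" "S - {a} \<in> link a \<S>"
      unfolding link_def by (auto simp: insert_absorb)
    then show "S \<in> insert a ` link a \<S>"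
      by blast
  qed (unfold link_def, blast)
  moreover have "inj_on (insert a) (link a \<S>)"
    unfolding link_def inj_on_def by (metis insert_ident mem_Collect_eq)
  moreover have "finite B" "a \<notin> B" if "B \<in> link a \<S>" for B
    using that assms unfolding link_def by auto
  ultimately have "(\<Sum>S\<in>{S\<in>\<S>. a \<in> S}. m ^ card S) = m * (\<Sum>B\<in>link a \<S>. m ^ card B)"
    by (simp add: sum.reindex sum_distrib_left)
  moreover have "(\<Sum>S\<in>\<S>. m ^ card S) = (\<Sum>S\<in>{S\<in>\<S>. a \<notin> S}. m ^ card S) + (\<Sum>S\<in>{S\<in>\<S>. a \<in> S}. m ^ card S)"
    using assms(1) by (subst sum.union_disjoint[symmetric]) (auto intro: sum.cong)
  ultimately show ?thesis
    by simp
qed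

lemma sum_weight_deletion_link_complement_le:
  fixes m :: nat
  assumes X: "finite X" "a \<in> X" and \<S>: "\<S> \<subseteq> Pow X" "non_covering X \<S>"
  shows "(\<Sum>S\<in>{S\<in>\<S>. a \<notin> S}. m ^ card S) + (\<Sum>B\<in>link a \<S>. m ^ (card X - 1 - card B))
    \<le> (m + 1) ^ (card X - 1)"
proof -
  define D where "D = X - {a}"
  define \<A> where "\<A> = {S\<in>\<S>. a \<notin> S}"
  define \<C> where "\<C> = (\<lambda>B. D - B) ` link a \<S>"
  have link_D: "link a \<S> \<subseteq> Pow D"
    unfolding D_def using link_subset_Pow[OF \<S>(1)] .
  have D: "finite D" "card D = card X - 1"
    using X unfolding D_def by auto
  have "\<A> \<subseteq> Pow D" "\<C> \<subseteq> Pow D"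
    using \<S>(1) unfolding \<A>_def \<C>_def D_def by auto
  then have fin: "finite \<A>" "finite \<C>"
    using D(1) by (auto intro: finite_subset)
  have "inj_on (\<lambda>B. D - B) (link a \<S>)"
    using link_D unfolding inj_on_def by blast
  then have "(\<Sum>C\<in>\<C>. m ^ card C) = (\<Sum>B\<in>link a \<S>. m ^ card (D - B))"
    unfolding \<C>_def by (simp add: sum.reindex)
  also have "\<dots> = (\<Sum>B\<in>link a \<S>. m ^ (card X - 1 - card B))"
  proof (rule sum.cong[OF refl])
    fix B
    assume "B \<in> link a \<S>"
    then have "B \<subseteq> D"
      using link_D by auto
    then show "m ^ card (D - B) = m ^ (card X - 1 - card B)"
      using D by (simp add: card_Diff_subset finite_subset)
  qed
  finally have complement_sum: "(\<Sum>C\<in>\<C>. m ^ card C) = (\<Sum>B\<in>link a \<S>. m ^ (card X - 1 - card B))" .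
  have "\<A> \<inter> \<C> = {}"
  proof -
    have "S \<union> insert a B = X" if "S \<in> \<S>" "a \<notin> S" "B \<in> link a \<S>" "S = D - B" for S B
      using that \<S>(1) X(2) link_D unfolding D_def by auto
    then show ?thesis
      using \<S>(2) unfolding \<A>_def \<C>_def non_covering_def link_def by blast
  qed
  then have "(\<Sum>S\<in>\<A>. m ^ card S) + (\<Sum>C\<in>\<C>. m ^ card C) = (\<Sum>S\<in>\<A> \<union> \<C>. m ^ card S)"
    using fin by (rule sum.union_disjoint[symmetric, rotated 2])
  also have "\<dots> \<le> (\<Sum>S\<in>Pow D. m ^ card S)"
    using \<open>\<A> \<subseteq> Pow D\<close> \<open>\<C> \<subseteq> Pow D\<close> D(1) by (intro sum_mono2) auto
  also have "\<dots> = (m + 1) ^ (card X - 1)"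
    unfolding D(2)[symmetric] by (rule sum_pow_card_Pow[OF D(1)])
  finally show ?thesis
    unfolding \<A>_def complement_sum .
qed

lemma card_link_le:
  assumes X: "finite X" "a \<in> X" and \<S>: "\<S> \<subseteq> Pow X" "non_covering X \<S>"
    and singletons: "\<And>x. x \<in> X \<Longrightarrow> {x} \<in> \<S>" and B: "B \<in> link a \<S>"
  shows "card B + 3 \<le> card X"
proof -
  define S where "S = insert a B"
  have S: "S \<in> \<S>" "S \<subseteq> X" "a \<notin> B"
    using B \<S>(1) unfolding S_def link_def by auto
  have "2 \<le> card (X - S)"
  proof (rule ccontr)
    assume "\<not> 2 \<le> card (X - S)"
    then have "card (X - S) = 0 \<or> card (X - S) = 1"
      by linarith
    then consider "X - S = {}" | "card (X - S) = 1"
      using X(1) by (auto simp: card_eq_0_iff)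
    then obtain i where "i \<in> X" "X - S \<subseteq> {i}"
    proof cases
      case 1
      then show ?thesis
        using that X(2) by blast
    next
      case 2
      then obtain i where "X - S = {i}"
        by (rule card_1_singletonE)
      then show ?thesis
        using that by blast
    qed
    then have "S \<union> {i} = X"
      using S(2) by auto
    then show False
      using \<S>(2) S(1) singletons[OF \<open>i \<in> X\<close>] unfolding non_covering_def by blast
  qed
  moreover have "finite S"
    using S(2) X(1) by (rule finite_subset)
  then have "card (X - S) = card X - card S" "card S = card B + 1"
    using S(2,3) unfolding S_def by (simp_all add: card_Diff_subset)
  ultimately show ?thesis
    by linarith
qed

lemma sum_weight_link_le:
  fixes m :: nat
  assumes X: "finite X" "a \<in> X" and \<S>: "\<S> \<subseteq> Pow X" "down_closed \<S>" "non_covering X \<S>"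
    and singletons: "\<And>x. x \<in> X \<Longrightarrow> {x} \<in> \<S>" and m: "1 \<le> m"
  shows "m * (\<Sum>B\<in>link a \<S>. m ^ card B) + m ^ (card X - 1)
    \<le> (\<Sum>B\<in>link a \<S>. m ^ (card X - 1 - card B)) + m"
proof -
  define d where "d = card X - 1"
  define \<B> where "\<B> = link a \<S>"
  define c where "c k = card {B\<in>\<B>. card B = k}" for k
  have \<B>_Pow: "\<B> \<subseteq> Pow (X - {a})" and "finite (X - {a})" and card_D: "card (X - {a}) = d"
    unfolding \<B>_def d_def using link_subset_Pow[OF \<S>(1)] X by auto
  then have "finite \<B>"
    using finite_subset by fastforce
  have small: "card B + 2 \<le> d" if "B \<in> \<B>" for B
    using card_link_le[OF X \<S>(1,3) singletons that[unfolded \<B>_def]] unfolding d_def by linarith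
  then have "card ` \<B> \<subseteq> {..<d}"
    by (auto dest: small)
  then have levels: "(\<Sum>B\<in>\<B>. f (card B)) = (\<Sum>k<d. c k * f k)" for f :: "nat \<Rightarrow> nat"
    using sum_fun_comp[OF \<open>finite \<B>\<close> _ \<open>card ` \<B> \<subseteq> {..<d}\<close>, of f] unfolding c_def by simp
  have "{B\<in>\<B>. card B = 0} = {{}}"
  proof -
    have "{} \<in> \<B>"
      using singletons[OF X(2)] unfolding \<B>_def link_def by simp
    moreover have "finite B" if "B \<in> \<B>" for B
      using that \<B>_Pow \<open>finite (X - {a})\<close> finite_subset by blast
    ultimately show ?thesis
      by auto
  qed
  then have "c 0 = 1"
    unfolding c_def by simp
  moreover have "{B\<in>\<B>. card B = d - 1} = {}"
    by (auto dest: small)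
  then have "c (d - 1) = 0"
    unfolding c_def by (simp only: card.empty)
  moreover have "c k \<le> c j" if "d \<le> 2 * k" "j + k + 1 = d" for k j
  proof -
    have "card (X - {a}) \<le> 2 * k" "j + k + 1 = card (X - {a})"
      using that card_D by simp_all
    with katona_level_ineq[OF \<open>finite (X - {a})\<close> \<B>_Pow] show ?thesis
      using down_closed_link[OF \<S>(2), of a, folded \<B>_def] non_covering_link[OF \<S>(3) X(2), folded \<B>_def]
      unfolding c_def by blast
  qed
  ultimately have "m * (\<Sum>k<d. c k * m ^ k) + m ^ d \<le> (\<Sum>k<d. c k * m ^ (d - k)) + m"
    by (rule level_profile_ineq[OF m])
  then show ?thesis
    unfolding \<B>_def[symmetric] d_def[symmetric] levels levels[of "\<lambda>k. m ^ (d - k)", simplified] .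
qed

lemma sum_weight_non_covering_le:
  fixes m :: nat and X :: "'a set"
  assumes X: "finite X" "X \<noteq> {}" and \<S>: "\<S> \<subseteq> Pow X" "down_closed \<S>" "non_covering X \<S>"
    and singletons: "\<And>x. x \<in> X \<Longrightarrow> {x} \<in> \<S>" and m: "1 \<le> m"
  shows "(\<Sum>S\<in>\<S>. m ^ card S) + m ^ (card X - 1) \<le> (m + 1) ^ (card X - 1) + m"
proof -
  obtain a where a: "a \<in> X"
    using X(2) by blast
  have "finite \<S>" "\<forall>S\<in>\<S>. finite S"
    using \<S>(1) X(1) by (auto intro: finite_subset)
  then show ?thesis
    using sum_weight_split_link[of \<S> m a] sum_weight_deletion_link_complement_le[OF X(1) a \<S>(1,3), of m]
      sum_weight_link_le[OF X(1) a \<S> singletons m]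
    by linarith
qed

section \<open>Supports of shifted intersecting families\<close>

definition support :: "nat \<Rightarrow> (nat \<Rightarrow> nat) \<Rightarrow> nat set" where
  "support r A = {l\<in>{1..r}. A l \<noteq> 1}"

lemma support_reset: "support r (\<lambda>l. if l \<in> Z then 1 else A l) = support r A - Z"
  unfolding support_def by auto

lemma cw_shifted_fun_upd_1:
  assumes F: "F \<subseteq> cube r n" "cw_shifted r n F" and A: "A \<in> F" and l: "l \<in> {1..r}"
  shows "A(l := 1) \<in> F"
proof (cases "A l = 1")
  case True
  then show ?thesis
    using A by (simp add: fun_upd_idem)
next
  case False
  have "A l \<in> {1..n}"
    using F(1) A l unfolding cube_def by (auto simp: PiE_iff)
  then have "A l \<in> {2..n}"
    using False by auto
  then have "shift_family l (A l) F = F"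
    using F(2) l unfolding cw_shifted_def by blast
  moreover have "A(l := 1) \<in> shift_family l (A l) F" if "A(l := 1) \<notin> F"
  proof -
    have "A(l := 1) = shift l (A l) F A"
      using that unfolding shift_def by simp
    then show ?thesis
      unfolding shift_family_def using A by (rule image_eqI)
  qed
  ultimately show ?thesis
    by blast
qed

lemma cw_shifted_reset:
  assumes F: "F \<subseteq> cube r n" "cw_shifted r n F" and A: "A \<in> F" and Z: "Z \<subseteq> {1..r}"
  shows "(\<lambda>l. if l \<in> Z then 1 else A l) \<in> F"
proof -
  have "finite Z"
    using Z finite_subset by blast
  then show ?thesis
    using Z
  proof (induction Z rule: finite_induct)
    case empty
    then show ?case
      using A by simp
  next
    case (insert z Z)
    then have "(\<lambda>l. if l \<in> Z then 1 else A l) \<in> F" "z \<in> {1..r}"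
      by simp_all
    then have "(\<lambda>l. if l \<in> Z then 1 else A l)(z := 1) \<in> F"
      by (rule cw_shifted_fun_upd_1[OF F])
    moreover have "(\<lambda>l. if l \<in> Z then 1 else A l)(z := 1) = (\<lambda>l. if l \<in> insert z Z then 1 else A l)"
      by (rule ext) simp
    ultimately show ?case
      by simp
  qed
qed

lemma down_closed_supports:
  assumes "F \<subseteq> cube r n" "cw_shifted r n F"
  shows "down_closed (support r ` F)"
  unfolding down_closed_def
proof (intro ballI allI impI)
  fix S T
  assume "S \<in> support r ` F" "T \<subseteq> S"
  then obtain A where A: "A \<in> F" "S = support r A"
    by blast
  have "support r A - T \<subseteq> {1..r}"
    unfolding support_def by auto
  then have "(\<lambda>l. if l \<in> support r A - T then 1 else A l) \<in> F"
    using cw_shifted_reset[OF assms A(1)] by blast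
  moreover have "T = support r (\<lambda>l. if l \<in> support r A - T then 1 else A l)"
    unfolding support_reset using A(2) \<open>T \<subseteq> S\<close> by auto
  ultimately show "T \<in> support r ` F"
    unfolding image_iff by blast
qed

lemma non_covering_supports:
  assumes "F \<subseteq> cube r n" "cw_shifted r n F" "intersecting r F"
  shows "non_covering {1..r} (support r ` F)"
  unfolding non_covering_def
proof (intro ballI notI)
  fix S T
  assume "S \<in> support r ` F" "T \<in> support r ` F" and cover: "S \<union> T = {1..r}"
  then obtain A B where A: "A \<in> F" "S = support r A" and B: "B \<in> F" "T = support r B"
    by blast
  txt \<open>Resetting \<open>B\<close> to \<open>1\<close> on the support of \<open>A\<close> stays in \<open>F\<close> and can agree with \<open>A\<close> only
    outside both supports.\<close>
  define B' where "B' = (\<lambda>l. if l \<in> support r A then 1 else B l)"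
  have "B' \<in> F"
    unfolding B'_def by (rule cw_shifted_reset[OF assms(1,2) B(1)]) (auto simp: support_def)
  then obtain l where l: "l \<in> {1..r}" "A l = B' l"
    using assms(3) A(1) unfolding intersecting_def by blast
  have "l \<notin> support r A"
  proof
    assume "l \<in> support r A"
    then have "B' l = 1" "A l \<noteq> 1"
      unfolding B'_def support_def by auto
    with l(2) show False
      by simp
  qed
  then have "A l = 1" "B' l = B l"
    using l(1) unfolding B'_def support_def by auto
  then have "l \<notin> S" "l \<notin> T"
    using l(2) unfolding A(2) B(2) support_def by auto
  then show False
    using cover l(1) by blast
qed

lemma singleton_mem_supports:
  assumes "F \<subseteq> cube r n" "cw_shifted r n F" "nontrivial r F" and l: "l \<in> {1..r}"
  shows "{l} \<in> support r ` F"
proof -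
  obtain A B where "A \<in> F" "B \<in> F" "A l \<noteq> B l"
    using assms(3) l unfolding nontrivial_def by blast
  then obtain C where "C \<in> F" "C l \<noteq> 1"
    by (cases "A l = 1") auto
  then have "support r C \<in> support r ` F" "{l} \<subseteq> support r C"
    using l unfolding support_def by auto
  then show ?thesis
    using down_closed_supports[OF assms(1,2)] unfolding down_closed_def by blast
qed

lemma support_class_eq_PiE:
  assumes n: "1 \<le> n" and S: "S \<subseteq> {1..r}"
  shows "{A\<in>cube r n. support r A = S} = PiE {1..r} (\<lambda>l. if l \<in> S then {2..n} else {1})"
    (is "_ = PiE _ ?B")
proof (rule set_eqI)
  fix A
  have coord: "A l \<in> {1..n} \<and> (A l \<noteq> 1 \<longleftrightarrow> l \<in> S) \<longleftrightarrow> A l \<in> ?B l" for l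
    using n by auto
  have "support r A = S \<longleftrightarrow> (\<forall>l\<in>{1..r}. A l \<noteq> 1 \<longleftrightarrow> l \<in> S)"
    using S unfolding support_def by blast
  then have "A \<in> {A\<in>cube r n. support r A = S}
      \<longleftrightarrow> A \<in> extensional {1..r} \<and> (\<forall>l\<in>{1..r}. A l \<in> {1..n} \<and> (A l \<noteq> 1 \<longleftrightarrow> l \<in> S))"
    unfolding cube_def PiE_iff by blast
  then show "A \<in> {A\<in>cube r n. support r A = S} \<longleftrightarrow> A \<in> PiE {1..r} ?B"
    unfolding coord PiE_iff by blast
qed

lemma card_support_class:
  assumes "1 \<le> n" "S \<subseteq> {1..r}"
  shows "card {A\<in>cube r n. support r A = S} = (n - 1) ^ card S"
proof -
  have "card (PiE {1..r} (\<lambda>l. if l \<in> S then {2..n} else {1})) = (\<Prod>l\<in>{1..r}. if l \<in> S then n - 1 else 1)"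
    by (simp add: card_PiE if_distrib cong: if_cong)
  also have "\<dots> = (n - 1) ^ card S"
    using assms(2) by (simp add: prod.If_cases Int_absorb1)
  finally show ?thesis
    unfolding support_class_eq_PiE[OF assms] .
qed

lemma card_le_sum_supports:
  assumes "F \<subseteq> cube r n" "1 \<le> n"
  shows "card F \<le> (\<Sum>S\<in>support r ` F. (n - 1) ^ card S)"
proof -
  have "finite (cube r n)"
    unfolding cube_def by (simp add: finite_PiE)
  then have "finite F"
    using assms(1) finite_subset by blast
  have "F \<subseteq> (\<Union>S\<in>support r ` F. {A\<in>cube r n. support r A = S})"
    using assms(1) by auto
  moreover have "(\<Union>S\<in>support r ` F. {A\<in>cube r n. support r A = S}) \<subseteq> cube r n"
    by blast
  ultimately have "card F \<le> card (\<Union>S\<in>support r ` F. {A\<in>cube r n. support r A = S})"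
    using \<open>finite (cube r n)\<close> by (meson card_mono finite_subset)
  also have "\<dots> \<le> (\<Sum>S\<in>support r ` F. card {A\<in>cube r n. support r A = S})"
    using \<open>finite F\<close> by (intro card_UN_le) simp
  also have "\<dots> = (\<Sum>S\<in>support r ` F. (n - 1) ^ card S)"
    using assms(2) by (intro sum.cong refl card_support_class) (auto simp: support_def)
  finally show ?thesis .
qed

theorem lemma2p5:
  fixes r n :: nat and F :: "(nat \<Rightarrow> nat) set"
  assumes "r \<ge> 3" and "n \<ge> 2"
    and "F \<subseteq> cube r n"
    and "cw_shifted r n F" and "intersecting r F" and "nontrivial r F"
    and "\<forall>G. G \<subseteq> cube r n \<and> cw_shifted r n G \<and> intersecting r G \<and> nontrivial r G
           \<longrightarrow> card G \<le> card F"
  shows "card F \<le> n ^ (r - 1) - (n - 1) ^ (r - 1) + n - 1"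
proof -
  have "support r ` F \<subseteq> Pow {1..r}"
    unfolding support_def by blast
  then have "(\<Sum>S\<in>support r ` F. (n - 1) ^ card S) + (n - 1) ^ (card {1..r} - 1)
      \<le> (n - 1 + 1) ^ (card {1..r} - 1) + (n - 1)"
    using assms(1,2) down_closed_supports[OF assms(3,4)] non_covering_supports[OF assms(3-5)]
      singleton_mem_supports[OF assms(3,4,6)]
    by (intro sum_weight_non_covering_le) auto
  then have "(\<Sum>S\<in>support r ` F. (n - 1) ^ card S) + (n - 1) ^ (r - 1) \<le> n ^ (r - 1) + (n - 1)"
    using assms(2) by simp
  moreover have "card F \<le> (\<Sum>S\<in>support r ` F. (n - 1) ^ card S)"
    using card_le_sum_supports[OF assms(3)] assms(2) by simp
  moreover have "(n - 1) ^ (r - 1) \<le> n ^ (r - 1)"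
    by (simp add: power_mono)
  ultimately show ?thesis
    using assms(2) by linarith
qed

end
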